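(* Let $L\in\mathbb{N}$, $\alpha>0$, and let $\widetilde{ALG}$ be an online block packing algorithm with the following guarantee for capacities $\tilde B=(\tilde B_j)$: on every instance with $\tilde q_{\max}:=\max_{i,j}w_{ij}/\tilde B_j\le\alpha$, its output $\tilde x$ has average block size $\tilde B$ with slackness $\tilde\Delta$, and for every horizon $\tilde T$ and every allocation $\tilde y$ respecting per-block limits $\tilde B_j$, $SW_{[1:\tilde T+\tilde\Gamma]}(\tilde x)\ge\tilde\lambda\,SW_{[1:\tilde T]}(\tilde y)$. Let $B_j=\tilde B_j/L$. Then on every instance with $q_{\max}:=\max_{i,j}w_{ij}/B_j\le\alpha L$, the batching algorithm with parameter $L$ using $\widetilde{ALG}$ as oracle outputs an allocation $x$ of average block size $B=(B_j)$ with slackness $\Delta=(\tilde\Delta+1)L$ such that for every horizon $T$ and every allocation $y$ respecting per-block limits $B_j$, $$SW_{[1:T+\Gamma]}(x)\ge(1-\rho_{\max})^{L-1}\tilde\lambda\,SW_{[1:T]}(y),\qquad\Gamma=(\tilde\Gamma+1)L,$$ where $\rho_{\max}=\max_i\rho_i$. This holds both when the comparison allocations $\tilde y,y$ range over integral allocations and when they range over fractional allocations.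
   Context: Online block packing: $m$ resources; transactions $i$ with arrival time $a_i\in\{1,2,\dots\}$, base value $v_i\ge0$, discount $\rho_i\in[0,1]$, demand $w_i\in\mathbb{R}_+^m$; value in block $t\ge a_i$ is $v_i^t=v_i(1-\rho_i)^{t-a_i}$. An allocation is $x=\{x_i^t\}$ with $x_i^t\in[0,1]$ ($\{0,1\}$ if integral), $x_i^t=0$ for $t<a_i$, $\sum_tx_i^t\le1$; it respects per-block limits $B_j$ if $\sum_iw_{ij}x_i^t\le B_j$ for all $t,j$; it has average block size $B$ with slackness $\Delta$ if for all $T_0,K\ge1$ and $j$, $\sum_{t=T_0}^{T_0+K-1}\sum_ix_i^tw_{ij}\le(K+\Delta)B_j$. $SW_{[1:T]}(x)=\sum_{t=1}^T\sum_ix_i^tv_i^t$. An online algorithm decides block $t$ using only transactions with $a_i\le t$. Batching algorithm with parameter $L$: for each block $t$, if $t$ is not a multiple of $L$ the block is empty ($x_i^t=0$ for all $i$); if $t=\tilde tL$, the batch $\tilde A_{\tilde t}=\{i:t-L<a_i\le t\}$ is fed to $\widetilde{ALG}$ as the transactions arriving at its time step $\tilde t$, where transaction $i$ is given base value $\tilde v_i=v_i(1-\rho_i)^{\tilde tL-a_i}$, discount factor $\tilde\rho_i=1-(1-\rho_i)^L$ and the same demand $w_i$; $\widetilde{ALG}$'s block $\tilde t$ output $\tilde x_i^{\tilde t}$ is used as $x_i^t=\tilde x_i^{\tilde t}$. *)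

theory Defs
  imports Main "HOL.Real"
begin

record txn =
  arr  :: nat
  val  :: real
  disc :: real
  dem  :: "nat \<Rightarrow> real"

text \<open>An instance is a finite set A of transaction identifiers together with
  their attributes tx. An algorithm maps an instance to an allocation
  x i t (transaction i, block t).\<close>
type_synonym 'i alg = "'i set \<Rightarrow> ('i \<Rightarrow> txn) \<Rightarrow> 'i \<Rightarrow> nat \<Rightarrow> real"

definition wf_instance :: "nat \<Rightarrow> 'i set \<Rightarrow> ('i \<Rightarrow> txn) \<Rightarrow> bool" where
  "wf_instance m A tx \<longleftrightarrow> finite A \<and>
     (\<forall>i\<in>A. arr (tx i) \<ge> 1 \<and> val (tx i) \<ge> 0 \<and> 0 \<le> disc (tx i) \<and> disc (tx i) \<le> 1 \<and>
        (\<forall>j<m. dem (tx i) j \<ge> 0))"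

definition qmax_le :: "nat \<Rightarrow> (nat \<Rightarrow> real) \<Rightarrow> 'i set \<Rightarrow> ('i \<Rightarrow> txn) \<Rightarrow> real \<Rightarrow> bool" where
  "qmax_le m B A tx a \<longleftrightarrow> (\<forall>i\<in>A. \<forall>j<m. dem (tx i) j / B j \<le> a)"

definition vt :: "txn \<Rightarrow> nat \<Rightarrow> real" where
  "vt \<tau> t = val \<tau> * (1 - disc \<tau>) ^ (t - arr \<tau>)"

definition SW :: "'i set \<Rightarrow> ('i \<Rightarrow> txn) \<Rightarrow> ('i \<Rightarrow> nat \<Rightarrow> real) \<Rightarrow> nat \<Rightarrow> real" where
  "SW A tx x T = (\<Sum>t\<in>{1..T}. \<Sum>i\<in>A. x i t * vt (tx i) t)"

text \<open>Allocation; integral if integ is True, fractional otherwise.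
  The condition sum over t of x i t \<le> 1 is stated via all partial sums.\<close>
definition is_alloc :: "bool \<Rightarrow> 'i set \<Rightarrow> ('i \<Rightarrow> txn) \<Rightarrow> ('i \<Rightarrow> nat \<Rightarrow> real) \<Rightarrow> bool" where
  "is_alloc integ A tx x \<longleftrightarrow>
     (\<forall>i\<in>A. (\<forall>t. 0 \<le> x i t \<and> x i t \<le> 1 \<and> (integ \<longrightarrow> x i t \<in> {0, 1})
                  \<and> (t < arr (tx i) \<longrightarrow> x i t = 0))
          \<and> (\<forall>T. (\<Sum>t\<le>T. x i t) \<le> 1))"

definition respects_limits :: "nat \<Rightarrow> (nat \<Rightarrow> real) \<Rightarrow> 'i set \<Rightarrow> ('i \<Rightarrow> txn) \<Rightarrow> ('i \<Rightarrow> nat \<Rightarrow> real) \<Rightarrow> bool" where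
  "respects_limits m B A tx x \<longleftrightarrow> (\<forall>t. \<forall>j<m. (\<Sum>i\<in>A. dem (tx i) j * x i t) \<le> B j)"

definition avg_block_size :: "nat \<Rightarrow> (nat \<Rightarrow> real) \<Rightarrow> real \<Rightarrow> 'i set \<Rightarrow> ('i \<Rightarrow> txn) \<Rightarrow> ('i \<Rightarrow> nat \<Rightarrow> real) \<Rightarrow> bool" where
  "avg_block_size m B \<Delta> A tx x \<longleftrightarrow>
     (\<forall>T0 K j. T0 \<ge> 1 \<longrightarrow> K \<ge> 1 \<longrightarrow> j < m \<longrightarrow>
        (\<Sum>t\<in>{T0..<T0+K}. \<Sum>i\<in>A. x i t * dem (tx i) j) \<le> (real K + \<Delta>) * B j)"

definition online :: "'i alg \<Rightarrow> bool" where
  "online ALG \<longleftrightarrow> (\<forall>A tx A' tx' t.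
     {i\<in>A. arr (tx i) \<le> t} = {i\<in>A'. arr (tx' i) \<le> t} \<and>
     (\<forall>i\<in>{i\<in>A. arr (tx i) \<le> t}. tx i = tx' i) \<longrightarrow>
     (\<forall>i\<in>{i\<in>A. arr (tx i) \<le> t}. ALG A tx i t = ALG A' tx' i t))"

definition rho_max :: "'i set \<Rightarrow> ('i \<Rightarrow> txn) \<Rightarrow> real" where
  "rho_max A tx = Max (insert 0 ((\<lambda>i. disc (tx i)) ` A))"

text \<open>Batch index of arrival a: the t~ with t~L - L < a \<le> t~L.\<close>
definition batch_idx :: "nat \<Rightarrow> nat \<Rightarrow> nat" where
  "batch_idx L a = (a + L - 1) div L"

definition batch_txn :: "nat \<Rightarrow> txn \<Rightarrow> txn" where
  "batch_txn L \<tau> = \<tau>\<lparr> arr := batch_idx L (arr \<tau>),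
      val := val \<tau> * (1 - disc \<tau>) ^ (batch_idx L (arr \<tau>) * L - arr \<tau>),
      disc := 1 - (1 - disc \<tau>) ^ L \<rparr>"

definition batching :: "nat \<Rightarrow> 'i alg \<Rightarrow> 'i alg" where
  "batching L ALG A tx = (\<lambda>i t. if 0 < t \<and> L dvd t
      then ALG A (\<lambda>k. batch_txn L (tx k)) i (t div L) else 0)"

end

theory Submission
  imports Defs
begin

text \<open>Batching is compared with the oracle through two maps between allocations of the
  original and of the batched instance. Stretching plays batch k in block k L; this is what the
  batching algorithm does, it preserves welfare exactly, and a window of K blocks meets at most
  K div L + 1 batches, which costs one batch of slackness. Compressing moves whatever a
  comparison allocation serves in the blocks k L - L < t \<le> k L into batch k: per-block limits
  B / L become per-batch limits B, and every transaction is served at most L - 1 blocks later,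
  so it keeps at least the fraction (1 - rho_max) ^ (L - 1) of its value. The oracle's guarantee
  for the compressed allocation thus transfers back, with one extra batch of horizon for the
  partially elapsed last window.\<close>

lemma batch_idx_bounds:
  assumes "L \<ge> 1"
  shows "a \<le> batch_idx L a * L" and "batch_idx L a * L < a + L"
proof -
  have eq: "batch_idx L a * L + (a + L - 1) mod L = a + L - 1"
    unfolding batch_idx_def by (rule div_mult_mod_eq)
  have "(a + L - 1) mod L < L" using assms by simp
  then show "a \<le> batch_idx L a * L" and "batch_idx L a * L < a + L"
    using eq assms by linarith+
qed

lemma less_batch_idx_iff:
  assumes "L \<ge> 1"
  shows "k < batch_idx L a \<longleftrightarrow> k * L < a"
proof
  assume "k < batch_idx L a"
  then have "Suc k * L \<le> batch_idx L a * L" by (intro mult_le_mono1) simp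
  then show "k * L < a" using batch_idx_bounds(2)[OF assms, of a] by simp
next
  assume "k * L < a"
  then have "k * L < batch_idx L a * L" using batch_idx_bounds(1)[OF assms, of a] by linarith
  then show "k < batch_idx L a" by simp
qed

lemma batch_idx_pos: "L \<ge> 1 \<Longrightarrow> a \<ge> 1 \<Longrightarrow> batch_idx L a \<ge> 1"
  using less_batch_idx_iff[of L 0 a] by simp

lemma arr_batch_txn [simp]: "arr (batch_txn L \<tau>) = batch_idx L (arr \<tau>)"
  and dem_batch_txn [simp]: "dem (batch_txn L \<tau>) = dem \<tau>"
  by (simp_all add: batch_txn_def)

lemma vt_batch_txn:
  assumes "L \<ge> 1" and "batch_idx L (arr \<tau>) \<le> k"
  shows "vt (batch_txn L \<tau>) k = vt \<tau> (k * L)"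
proof -
  let ?b = "batch_idx L (arr \<tau>)" and ?d = "1 - disc \<tau>"
  obtain e where k: "k = ?b + e" using assms(2) le_Suc_ex by blast
  have "k * L - arr \<tau> = (?b * L - arr \<tau>) + L * e"
    using batch_idx_bounds(1)[OF assms(1), of "arr \<tau>"] k by (simp add: algebra_simps)
  then have "?d ^ (k * L - arr \<tau>) = ?d ^ (?b * L - arr \<tau>) * (?d ^ L) ^ e"
    by (simp only: power_add power_mult)
  then show ?thesis unfolding vt_def batch_txn_def using k by simp
qed

lemma vt_nonneg: "0 \<le> val \<tau> \<Longrightarrow> disc \<tau> \<le> 1 \<Longrightarrow> 0 \<le> vt \<tau> t"
  unfolding vt_def by simp

text \<open>The batched value at batch k is the original value at block k L, at most L - 1
  discount steps after t.\<close>
lemma vt_batch_txn_ge: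
  assumes L: "L \<ge> 1" and arr: "arr \<tau> \<le> t" and t: "k * L - L < t" "t \<le> k * L"
    and val: "0 \<le> val \<tau>" and disc: "0 \<le> disc \<tau>" "disc \<tau> \<le> r" "r \<le> 1"
  shows "(1 - r) ^ (L - 1) * vt \<tau> t \<le> vt (batch_txn L \<tau>) k"
proof -
  let ?d = "1 - disc \<tau>"
  have "batch_idx L (arr \<tau>) \<le> k"
    using less_batch_idx_iff[OF L] arr t(2) by (meson le_trans not_le)
  then have "vt (batch_txn L \<tau>) k = vt \<tau> (k * L)" by (rule vt_batch_txn[OF L])
  also have "\<dots> = vt \<tau> t * ?d ^ (k * L - t)"
  proof -
    have "k * L - arr \<tau> = (t - arr \<tau>) + (k * L - t)" using arr t(2) by simp
    then show ?thesis unfolding vt_def by (simp add: power_add)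
  qed
  finally have v: "vt (batch_txn L \<tau>) k = vt \<tau> t * ?d ^ (k * L - t)" .
  have "(1 - r) ^ (L - 1) \<le> ?d ^ (L - 1)"
    using disc by (intro power_mono) auto
  also have "\<dots> \<le> ?d ^ (k * L - t)"
    using t disc by (intro power_decreasing) auto
  finally have "(1 - r) ^ (L - 1) \<le> ?d ^ (k * L - t)" .
  from mult_right_mono[OF this vt_nonneg[of \<tau> t]] show ?thesis
    unfolding v using val disc by (simp add: mult.commute)
qed

definition batch_tx :: "nat \<Rightarrow> ('i \<Rightarrow> txn) \<Rightarrow> 'i \<Rightarrow> txn" where
  "batch_tx L tx = (\<lambda>i. batch_txn L (tx i))"

definition stretch :: "nat \<Rightarrow> ('i \<Rightarrow> nat \<Rightarrow> real) \<Rightarrow> 'i \<Rightarrow> nat \<Rightarrow> real" where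
  "stretch L x = (\<lambda>i t. if 0 < t \<and> L dvd t then x i (t div L) else 0)"

definition compress :: "nat \<Rightarrow> ('i \<Rightarrow> nat \<Rightarrow> real) \<Rightarrow> 'i \<Rightarrow> nat \<Rightarrow> real" where
  "compress L y = (\<lambda>i k. \<Sum>t\<in>{k * L - L<..k * L}. y i t)"

lemma batching_eq_stretch: "batching L ALG A tx = stretch L (ALG A (batch_tx L tx))"
  unfolding batching_def stretch_def batch_tx_def ..

lemma sum_stretch_eq:
  fixes f :: "nat \<Rightarrow> 'a::comm_monoid_add"
  assumes "L \<ge> 1" and "finite S"
  shows "(\<Sum>t\<in>S. if 0 < t \<and> L dvd t then f (t div L) else 0) = (\<Sum>k\<in>{k. 0 < k \<and> k * L \<in> S}. f k)"
proof -
  have "{t\<in>S. 0 < t \<and> L dvd t} = (\<lambda>k. k * L) ` {k. 0 < k \<and> k * L \<in> S}"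
    using assms(1) by (auto elim!: dvdE simp: mult.commute)
  moreover have "inj_on (\<lambda>k. k * L) {k. 0 < k \<and> k * L \<in> S}"
    using assms(1) by (auto simp: inj_on_def)
  ultimately show ?thesis
    using assms by (simp add: sum.inter_filter[symmetric] sum.reindex)
qed

lemma multiples_in_atLeastAtMost:
  fixes L N :: nat
  assumes "L \<ge> 1"
  shows "{k. 0 < k \<and> k * L \<in> {1..N}} = {1..N div L}"
proof -
  have "k * L \<le> N \<longleftrightarrow> k \<le> N div L" for k
    using assms by (simp add: less_eq_div_iff_mult_less_eq)
  moreover have "0 < k \<Longrightarrow> 1 \<le> k * L" for k
    using assms by simp
  ultimately show ?thesis by auto
qed

lemma sum_consecutive_blocks:
  fixes g :: "nat \<Rightarrow> 'a::comm_monoid_add"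
  shows "(\<Sum>k\<le>K. \<Sum>t\<in>{k * L - L<..k * L}. g t) = (\<Sum>t\<in>{0<..K * L}. g t)"
proof (induction K)
  case (Suc K)
  have "{0<..Suc K * L} = {0<..K * L} \<union> {K * L<..K * L + L}" by auto
  then have "(\<Sum>t\<in>{0<..Suc K * L}. g t) = (\<Sum>t\<in>{0<..K * L}. g t) + (\<Sum>t\<in>{K * L<..K * L + L}. g t)"
    by (simp add: sum.union_disjoint)
  then show ?case using Suc by (simp add: add.commute)
qed simp

lemma sum_in_01:
  fixes g :: "'a \<Rightarrow> real"
  assumes "finite S" and "\<forall>t\<in>S. g t \<in> {0, 1}" and "sum g S \<le> 1"
  shows "sum g S \<in> {0, 1}"
proof (cases "\<exists>t\<in>S. g t = 1")
  case True
  then obtain t where "t \<in> S" "g t = 1" by blast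
  moreover have "g t \<le> sum g S" using assms \<open>t \<in> S\<close> by (intro member_le_sum) auto
  ultimately show ?thesis using assms(3) by auto
next
  case False
  then show ?thesis using assms(2) by auto
qed

lemma wf_instance_batch_tx:
  assumes "L \<ge> 1" and "wf_instance m A tx"
  shows "wf_instance m A (batch_tx L tx)"
proof -
  have "finite A" using assms(2) by (simp add: wf_instance_def)
  then show ?thesis
    unfolding wf_instance_def
  proof (intro conjI[of "finite A"] ballI)
    fix i assume "i \<in> A"
    then have tx: "arr (tx i) \<ge> 1" "val (tx i) \<ge> 0" "0 \<le> disc (tx i)" "disc (tx i) \<le> 1"
        "\<forall>j<m. dem (tx i) j \<ge> 0"
      using assms(2) by (auto simp: wf_instance_def)
    then have "(1 - disc (tx i)) ^ L \<le> 1" by (intro power_le_one) auto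
    then show "1 \<le> arr (batch_tx L tx i) \<and> 0 \<le> val (batch_tx L tx i) \<and> 0 \<le> disc (batch_tx L tx i)
        \<and> disc (batch_tx L tx i) \<le> 1 \<and> (\<forall>j<m. 0 \<le> dem (batch_tx L tx i) j)"
      using tx batch_idx_pos[OF assms(1)] by (simp add: batch_tx_def batch_txn_def)
  qed
qed

lemma qmax_le_batch_tx:
  assumes "L \<ge> 1" and "qmax_le m (\<lambda>j. B j / real L) A tx (a * real L)"
  shows "qmax_le m B A (batch_tx L tx) a"
  unfolding qmax_le_def
proof (intro ballI allI impI)
  fix i j assume "i \<in> A" "j < m"
  then have "dem (tx i) j / (B j / real L) \<le> a * real L"
    using assms(2) by (simp add: qmax_le_def)
  moreover have "dem (tx i) j / (B j / real L) = dem (tx i) j / B j * real L"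
    by simp
  ultimately have "dem (tx i) j / B j * real L \<le> a * real L"
    by simp
  then have "dem (tx i) j / B j \<le> a"
    by (rule mult_right_le_imp_le) (use assms(1) in simp)
  then show "dem (batch_tx L tx i) j / B j \<le> a"
    by (simp add: batch_tx_def)
qed

lemma avg_block_size_batch_tx_iff [simp]:
  "avg_block_size m B \<Delta> A (batch_tx L tx) x \<longleftrightarrow> avg_block_size m B \<Delta> A tx x"
  by (simp add: avg_block_size_def batch_tx_def)

lemma
  assumes "wf_instance m A tx"
  shows disc_le_rho_max: "i \<in> A \<Longrightarrow> disc (tx i) \<le> rho_max A tx"
    and rho_max_le_1: "rho_max A tx \<le> 1"
proof -
  have fin: "finite A" using assms by (simp add: wf_instance_def)
  show "i \<in> A \<Longrightarrow> disc (tx i) \<le> rho_max A tx"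
    unfolding rho_max_def using fin by (intro Max_ge) auto
  have "rho_max A tx \<in> insert 0 ((\<lambda>i. disc (tx i)) ` A)"
    unfolding rho_max_def using fin by (intro Max_in) auto
  then show "rho_max A tx \<le> 1" using assms by (auto simp: wf_instance_def)
qed

lemma
  assumes "wf_instance m A tx" and "is_alloc integ A tx x"
  shows SW_nonneg: "0 \<le> SW A tx x T"
    and SW_mono: "T \<le> T' \<Longrightarrow> SW A tx x T \<le> SW A tx x T'"
proof -
  have "0 \<le> x i t * vt (tx i) t" if "i \<in> A" for i t
    using assms that vt_nonneg[of "tx i" t] by (auto simp: wf_instance_def is_alloc_def)
  then show "0 \<le> SW A tx x T" and "T \<le> T' \<Longrightarrow> SW A tx x T \<le> SW A tx x T'"
    unfolding SW_def by (auto intro!: sum_nonneg sum_mono2)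
qed

lemma is_alloc_stretch:
  assumes L: "L \<ge> 1" and x: "is_alloc integ A (batch_tx L tx) x"
  shows "is_alloc integ A tx (stretch L x)"
proof -
  have x_i: "0 \<le> x i k" "x i k \<le> 1" "integ \<Longrightarrow> x i k \<in> {0, 1}"
      "k < batch_idx L (arr (tx i)) \<Longrightarrow> x i k = 0" "(\<Sum>k\<le>K. x i k) \<le> 1"
    if "i \<in> A" for i k K
    using x that by (auto simp: is_alloc_def batch_tx_def)
  have before_arrival: "stretch L x i t = 0" if i: "i \<in> A" and t: "t < arr (tx i)" for i t
  proof (cases "0 < t \<and> L dvd t")
    case True
    then have "t div L * L < arr (tx i)" using t by simp
    then show ?thesis using True x_i(4)[OF i] less_batch_idx_iff[OF L] by (simp add: stretch_def)
  qed (auto simp: stretch_def)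
  have partial_sums: "(\<Sum>t\<le>T. stretch L x i t) \<le> 1" if i: "i \<in> A" for i T
  proof -
    have "(\<Sum>t\<le>T. stretch L x i t) = (\<Sum>k\<in>{k. 0 < k \<and> k * L \<in> {..T}}. x i k)"
      unfolding stretch_def by (rule sum_stretch_eq[OF L]) simp
    also have "\<dots> \<le> (\<Sum>k\<le>T. x i k)"
    proof (rule sum_mono2)
      show "{k. 0 < k \<and> k * L \<in> {..T}} \<subseteq> {..T}"
      proof
        fix k assume "k \<in> {k. 0 < k \<and> k * L \<in> {..T}}"
        then have "k * L \<le> T" by simp
        moreover have "k \<le> k * L" using L by simp
        ultimately show "k \<in> {..T}" by (simp only: atMost_iff)
      qed
    qed (use x_i(1)[OF i] in auto)
    also have "\<dots> \<le> 1" using x_i(5)[OF i] .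
    finally show ?thesis .
  qed
  show ?thesis
    unfolding is_alloc_def using before_arrival partial_sums x_i(1-3)
    by (auto simp: stretch_def)
qed

lemma avg_block_size_stretch:
  assumes L: "L \<ge> 1" and B: "\<forall>j<m. 0 \<le> B j"
    and x_nonneg: "\<And>i k. i \<in> A \<Longrightarrow> 0 \<le> x i k"
    and dem_nonneg: "\<And>i j. i \<in> A \<Longrightarrow> j < m \<Longrightarrow> 0 \<le> dem (tx i) j"
    and x: "avg_block_size m B \<Delta> A tx x"
  shows "avg_block_size m (\<lambda>j. B j / real L) ((\<Delta> + 1) * real L) A tx (stretch L x)"
  unfolding avg_block_size_def
proof (intro allI impI)
  fix T0 K j :: nat assume T0: "1 \<le> T0" and K: "1 \<le> K" and j: "j < m"
  define U where "U k = (\<Sum>i\<in>A. x i k * dem (tx i) j)" for k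
  define k0 where "k0 = batch_idx L T0"
  define c where "c = K div L + 1"
  have U_nonneg: "0 \<le> U k" for k
    unfolding U_def using x_nonneg dem_nonneg j by (intro sum_nonneg) auto
  have window: "{k. 0 < k \<and> k * L \<in> {T0..<T0 + K}} \<subseteq> {k0..<k0 + c}"
  proof
    fix k assume "k \<in> {k. 0 < k \<and> k * L \<in> {T0..<T0 + K}}"
    then have k: "T0 \<le> k * L" "k * L < T0 + K" by auto
    then have "k0 \<le> k" using less_batch_idx_iff[OF L, of k T0] by (simp add: k0_def)
    moreover have "T0 \<le> k0 * L" using batch_idx_bounds(1)[OF L] by (simp add: k0_def)
    ultimately have "(k - k0) * L \<le> K" using k by (simp add: diff_mult_distrib)
    then have "k - k0 \<le> K div L" using L by (simp add: less_eq_div_iff_mult_less_eq)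
    then show "k \<in> {k0..<k0 + c}" using \<open>k0 \<le> k\<close> by (simp add: c_def)
  qed
  have "c * L \<le> K + L" using div_times_less_eq_dividend[of K L] by (simp add: c_def)
  then have c: "(real c + \<Delta>) * real L \<le> real K + (\<Delta> + 1) * real L"
    by (simp add: algebra_simps flip: of_nat_mult of_nat_add)
  have "(\<Sum>t\<in>{T0..<T0 + K}. \<Sum>i\<in>A. stretch L x i t * dem (tx i) j)
      = (\<Sum>t\<in>{T0..<T0 + K}. if 0 < t \<and> L dvd t then U (t div L) else 0)"
    by (intro sum.cong) (auto simp: stretch_def U_def)
  also have "\<dots> = (\<Sum>k\<in>{k. 0 < k \<and> k * L \<in> {T0..<T0 + K}}. U k)"
    by (rule sum_stretch_eq[OF L]) simp
  also have "\<dots> \<le> (\<Sum>k\<in>{k0..<k0 + c}. U k)"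
    by (rule sum_mono2) (use window U_nonneg in auto)
  also have "\<dots> \<le> (real c + \<Delta>) * B j"
  proof -
    have "1 \<le> k0" "1 \<le> c" using batch_idx_pos[OF L T0] by (simp_all add: k0_def c_def)
    then show ?thesis using x j unfolding avg_block_size_def U_def by blast
  qed
  also have "\<dots> = (real c + \<Delta>) * real L * (B j / real L)"
    using L by simp
  also have "\<dots> \<le> (real K + (\<Delta> + 1) * real L) * (B j / real L)"
    using c B j by (intro mult_right_mono) auto
  finally show "(\<Sum>t\<in>{T0..<T0 + K}. \<Sum>i\<in>A. stretch L x i t * dem (tx i) j)
      \<le> (real K + (\<Delta> + 1) * real L) * (B j / real L)" .
qed

lemma SW_stretch:
  assumes L: "L \<ge> 1" and x: "is_alloc integ A (batch_tx L tx) x"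
  shows "SW A tx (stretch L x) N = SW A (batch_tx L tx) x (N div L)"
proof -
  define f where "f k = (\<Sum>i\<in>A. x i k * vt (tx i) (k * L))" for k
  have "SW A tx (stretch L x) N = (\<Sum>t\<in>{1..N}. if 0 < t \<and> L dvd t then f (t div L) else 0)"
    unfolding SW_def by (intro sum.cong) (auto simp: stretch_def f_def)
  also have "\<dots> = (\<Sum>k\<in>{1..N div L}. f k)"
    by (simp only: sum_stretch_eq[OF L finite_atLeastAtMost] multiples_in_atLeastAtMost[OF L])
  also have "\<dots> = SW A (batch_tx L tx) x (N div L)"
    unfolding SW_def f_def
  proof (intro sum.cong refl)
    fix k i assume "i \<in> A"
    then have "k < batch_idx L (arr (tx i)) \<Longrightarrow> x i k = 0"
      using x by (auto simp: is_alloc_def batch_tx_def)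
    then show "x i k * vt (tx i) (k * L) = x i k * vt (batch_tx L tx i) k"
      using vt_batch_txn[OF L] by (cases "k < batch_idx L (arr (tx i))") (auto simp: batch_tx_def)
  qed
  finally show ?thesis .
qed

lemma is_alloc_compress:
  assumes L: "L \<ge> 1" and y: "is_alloc integ A tx y"
  shows "is_alloc integ A (batch_tx L tx) (compress L y)"
proof -
  have y_i: "0 \<le> y i t" "integ \<Longrightarrow> y i t \<in> {0, 1}" "t < arr (tx i) \<Longrightarrow> y i t = 0"
      "(\<Sum>t\<le>T. y i t) \<le> 1"
    if "i \<in> A" for i t T
    using y that by (auto simp: is_alloc_def)
  have nonneg: "0 \<le> compress L y i k" if i: "i \<in> A" for i k
    unfolding compress_def using y_i(1)[OF i] by (simp add: sum_nonneg)
  have partial_sums: "(\<Sum>k\<le>K. compress L y i k) \<le> 1" if i: "i \<in> A" for i K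
  proof -
    have "(\<Sum>k\<le>K. compress L y i k) = (\<Sum>t\<in>{0<..K * L}. y i t)"
      unfolding compress_def by (rule sum_consecutive_blocks)
    also have "\<dots> \<le> (\<Sum>t\<le>K * L. y i t)"
      by (rule sum_mono2) (use y_i(1)[OF i] in auto)
    also have "\<dots> \<le> 1" using y_i(4)[OF i] .
    finally show ?thesis .
  qed
  have le_1: "compress L y i k \<le> 1" if i: "i \<in> A" for i k
  proof -
    have "compress L y i k \<le> (\<Sum>k'\<le>k. compress L y i k')"
      by (rule member_le_sum) (use nonneg[OF i] in auto)
    then show ?thesis using partial_sums[OF i, of k] by linarith
  qed
  have integral: "compress L y i k \<in> {0, 1}" if i: "i \<in> A" and "integ" for i k
    using le_1[OF i] y_i(2)[OF i \<open>integ\<close>] unfolding compress_def by (intro sum_in_01) auto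
  have before_arrival: "compress L y i k = 0" if i: "i \<in> A" and k: "k < batch_idx L (arr (tx i))" for i k
  proof -
    have "k * L < arr (tx i)" using k less_batch_idx_iff[OF L] by blast
    then show ?thesis unfolding compress_def using y_i(3)[OF i] by (intro sum.neutral) auto
  qed
  show ?thesis
    unfolding is_alloc_def
    using nonneg le_1 integral before_arrival partial_sums by (simp add: batch_tx_def)
qed

lemma respects_limits_compress:
  assumes B: "\<forall>j<m. 0 \<le> B j" and y: "respects_limits m (\<lambda>j. B j / real L) A tx y"
  shows "respects_limits m B A (batch_tx L tx) (compress L y)"
  unfolding respects_limits_def
proof (intro allI impI)
  fix k j assume j: "j < m"
  let ?I = "{k * L - L<..k * L}"
  have "(\<Sum>i\<in>A. dem (batch_tx L tx i) j * compress L y i k) = (\<Sum>t\<in>?I. \<Sum>i\<in>A. dem (tx i) j * y i t)"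
    by (simp add: compress_def batch_tx_def sum_distrib_left sum.swap[of _ ?I])
  also have "\<dots> \<le> (\<Sum>t\<in>?I. B j / real L)"
    using y j by (intro sum_mono) (simp add: respects_limits_def)
  also have "\<dots> = real (card ?I) * (B j / real L)"
    by simp
  also have "\<dots> \<le> real L * (B j / real L)"
  proof (rule mult_right_mono)
    have "card ?I \<le> L" by simp
    then show "real (card ?I) \<le> real L" by (simp only: of_nat_le_iff)
  qed (use B j in simp)
  also have "\<dots> \<le> B j"
    using B j by (cases "L = 0") auto
  finally show "(\<Sum>i\<in>A. dem (batch_tx L tx i) j * compress L y i k) \<le> B j" .
qed

lemma SW_compress_ge:
  assumes L: "L \<ge> 1" and wf: "wf_instance m A tx" and y: "is_alloc integ A tx y"
  shows "(1 - rho_max A tx) ^ (L - 1) * SW A tx y T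
      \<le> SW A (batch_tx L tx) (compress L y) (T div L + 1)"
proof -
  define K where "K = T div L + 1"
  define c where "c = (1 - rho_max A tx) ^ (L - 1)"
  let ?I = "\<lambda>k. {k * L - L<..k * L}"
  have c_nonneg: "0 \<le> c" using rho_max_le_1[OF wf] by (simp add: c_def)
  have y_i: "0 \<le> y i t" "t < arr (tx i) \<Longrightarrow> y i t = 0" if "i \<in> A" for i t
    using y that by (auto simp: is_alloc_def)
  have pointwise: "c * (y i t * vt (tx i) t) \<le> y i t * vt (batch_tx L tx i) k"
    if i: "i \<in> A" and t: "t \<in> ?I k" for i t k
  proof (cases "t < arr (tx i)")
    case False
    have "c * vt (tx i) t \<le> vt (batch_tx L tx i) k"
      unfolding c_def batch_tx_def
      using i t False wf disc_le_rho_max[OF wf i] rho_max_le_1[OF wf]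
      by (intro vt_batch_txn_ge[OF L]) (auto simp: wf_instance_def)
    from mult_left_mono[OF this y_i(1)[OF i, of t]] show ?thesis
      by (simp only: mult.left_commute)
  qed (simp add: y_i(2)[OF i])
  have "T \<le> K * L"
  proof -
    have "T = T div L * L + T mod L" by simp
    moreover have "T mod L < L" using L by simp
    ultimately have "T < T div L * L + L" by linarith
    then show ?thesis by (simp add: K_def)
  qed
  then have "SW A tx y T \<le> SW A tx y (K * L)" by (rule SW_mono[OF wf y])
  also have "\<dots> = (\<Sum>t\<in>{0<..K * L}. \<Sum>i\<in>A. y i t * vt (tx i) t)"
    unfolding SW_def by (rule sum.cong) auto
  also have "\<dots> = (\<Sum>k\<le>K. \<Sum>t\<in>?I k. \<Sum>i\<in>A. y i t * vt (tx i) t)"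
    by (rule sum_consecutive_blocks[symmetric])
  finally have "c * SW A tx y T \<le> c * (\<Sum>k\<le>K. \<Sum>t\<in>?I k. \<Sum>i\<in>A. y i t * vt (tx i) t)"
    using c_nonneg by (rule mult_left_mono)
  also have "\<dots> = (\<Sum>k\<le>K. \<Sum>t\<in>?I k. \<Sum>i\<in>A. c * (y i t * vt (tx i) t))"
    by (simp add: sum_distrib_left)
  also have "\<dots> \<le> (\<Sum>k\<le>K. \<Sum>t\<in>?I k. \<Sum>i\<in>A. y i t * vt (batch_tx L tx i) k)"
    by (intro sum_mono pointwise)
  also have "\<dots> = (\<Sum>k\<le>K. \<Sum>i\<in>A. compress L y i k * vt (batch_tx L tx i) k)"
    by (simp add: compress_def sum_distrib_right sum.swap[of _ "?I _"])
  also have "\<dots> = SW A (batch_tx L tx) (compress L y) K"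
    unfolding SW_def by (rule sum.mono_neutral_right) (auto simp: compress_def)
  finally show ?thesis by (simp add: c_def K_def)
qed

lemma approximation_ratio_compose:
  fixes c lam a b b' :: real
  assumes "0 \<le> c" and "0 \<le> a" and "0 \<le> b'" and "c * a \<le> b" and "lam * b \<le> b'"
  shows "c * lam * a \<le> b'"
proof (cases "0 \<le> lam")
  case True
  with assms(4) have "lam * (c * a) \<le> lam * b" by (rule mult_left_mono)
  then show ?thesis using assms(5) by (simp add: mult.left_commute)
next
  case False
  then have "c * lam * a \<le> 0"
    using assms(1,2) by (simp add: mult_nonneg_nonpos mult_nonpos_nonneg)
  then show ?thesis using assms(3) by linarith
qed

lemma stretch_guarantee:
  assumes L: "L \<ge> 1" and B: "\<forall>j<m. 0 \<le> B j" and wf: "wf_instance m A tx"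
    and x_alloc: "is_alloc False A (batch_tx L tx) x"
    and x_avg: "avg_block_size m B \<Delta> A (batch_tx L tx) x"
    and x_welfare: "\<forall>T y. is_alloc integ A (batch_tx L tx) y \<and> respects_limits m B A (batch_tx L tx) y
      \<longrightarrow> SW A (batch_tx L tx) x (T + \<Gamma>) \<ge> lam * SW A (batch_tx L tx) y T"
  shows "is_alloc False A tx (stretch L x) \<and>
      avg_block_size m (\<lambda>j. B j / real L) ((\<Delta> + 1) * real L) A tx (stretch L x) \<and>
      (\<forall>T y. is_alloc integ A tx y \<and> respects_limits m (\<lambda>j. B j / real L) A tx y \<longrightarrow>
         SW A tx (stretch L x) (T + (\<Gamma> + 1) * L) \<ge> (1 - rho_max A tx) ^ (L - 1) * lam * SW A tx y T)"
proof (intro conjI allI impI)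
  show "is_alloc False A tx (stretch L x)" by (rule is_alloc_stretch[OF L x_alloc])
  show "avg_block_size m (\<lambda>j. B j / real L) ((\<Delta> + 1) * real L) A tx (stretch L x)"
    using x_alloc wf x_avg
    by (intro avg_block_size_stretch[OF L B]) (auto simp: is_alloc_def wf_instance_def)
  fix T y assume y: "is_alloc integ A tx y \<and> respects_limits m (\<lambda>j. B j / real L) A tx y"
  define K where "K = T div L + 1"
  have "(1 - rho_max A tx) ^ (L - 1) * lam * SW A tx y T \<le> SW A (batch_tx L tx) x (K + \<Gamma>)"
  proof (rule approximation_ratio_compose)
    show "0 \<le> (1 - rho_max A tx) ^ (L - 1)" using rho_max_le_1[OF wf] by simp
    show "0 \<le> SW A tx y T" using SW_nonneg[OF wf] y by blast
    show "0 \<le> SW A (batch_tx L tx) x (K + \<Gamma>)"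
      by (rule SW_nonneg[OF wf_instance_batch_tx[OF L wf] x_alloc])
    show "(1 - rho_max A tx) ^ (L - 1) * SW A tx y T \<le> SW A (batch_tx L tx) (compress L y) K"
      unfolding K_def using y by (intro SW_compress_ge[OF L wf]) auto
    show "lam * SW A (batch_tx L tx) (compress L y) K \<le> SW A (batch_tx L tx) x (K + \<Gamma>)"
      using x_welfare y B is_alloc_compress[OF L] respects_limits_compress by blast
  qed
  moreover have "(T + (\<Gamma> + 1) * L) div L = K + \<Gamma>"
    using L div_mult_self1[of L T "\<Gamma> + 1"] by (simp add: K_def)
  ultimately show "(1 - rho_max A tx) ^ (L - 1) * lam * SW A tx y T
      \<le> SW A tx (stretch L x) (T + (\<Gamma> + 1) * L)"
    by (simp add: SW_stretch[OF L x_alloc])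
qed

theorem lemma9:
  fixes ALGt :: "'i alg" and m L :: nat and alpha Delt lamt :: real and Gamt :: nat
    and Bt :: "nat \<Rightarrow> real" and integ :: bool
  assumes L_pos: "L \<ge> 1" and alpha_pos: "alpha > 0"
    and Bt_pos: "\<forall>j<m. Bt j > 0"
    and alg_online: "online ALGt"
    and alg_alloc: "\<forall>A tx. wf_instance m A tx \<longrightarrow> is_alloc False A tx (ALGt A tx)"
    and alg_guarantee: "\<forall>A tx. wf_instance m A tx \<and> qmax_le m Bt A tx alpha \<longrightarrow>
        avg_block_size m Bt Delt A tx (ALGt A tx) \<and>
        (\<forall>T y. is_alloc integ A tx y \<and> respects_limits m Bt A tx y \<longrightarrow>
           SW A tx (ALGt A tx) (T + Gamt) \<ge> lamt * SW A tx y T)"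
  shows "\<forall>A tx. wf_instance m A tx \<and> qmax_le m (\<lambda>j. Bt j / real L) A tx (alpha * real L) \<longrightarrow>
      is_alloc False A tx (batching L ALGt A tx) \<and>
      avg_block_size m (\<lambda>j. Bt j / real L) ((Delt + 1) * real L) A tx (batching L ALGt A tx) \<and>
      (\<forall>T y. is_alloc integ A tx y \<and> respects_limits m (\<lambda>j. Bt j / real L) A tx y \<longrightarrow>
         SW A tx (batching L ALGt A tx) (T + (Gamt + 1) * L)
           \<ge> (1 - rho_max A tx) ^ (L - 1) * lamt * SW A tx y T)"
proof (intro allI impI)
  fix A and tx :: "'i \<Rightarrow> txn"
  assume "wf_instance m A tx \<and> qmax_le m (\<lambda>j. Bt j / real L) A tx (alpha * real L)"
  then have wf: "wf_instance m A tx"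
    and wf_batch: "wf_instance m A (batch_tx L tx)"
    and qmax_batch: "qmax_le m Bt A (batch_tx L tx) alpha"
    using wf_instance_batch_tx[OF L_pos] qmax_le_batch_tx[OF L_pos] by blast+
  have Bt_nonneg: "\<forall>j<m. 0 \<le> Bt j" using Bt_pos by (simp add: less_imp_le)
  show "is_alloc False A tx (batching L ALGt A tx) \<and>
      avg_block_size m (\<lambda>j. Bt j / real L) ((Delt + 1) * real L) A tx (batching L ALGt A tx) \<and>
      (\<forall>T y. is_alloc integ A tx y \<and> respects_limits m (\<lambda>j. Bt j / real L) A tx y \<longrightarrow>
         SW A tx (batching L ALGt A tx) (T + (Gamt + 1) * L)
           \<ge> (1 - rho_max A tx) ^ (L - 1) * lamt * SW A tx y T)"
    unfolding batching_eq_stretch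
    using alg_alloc alg_guarantee wf_batch qmax_batch
    by (intro stretch_guarantee[OF L_pos Bt_nonneg wf]) blast+
qed

end
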